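(* For every $d>0$, the Domino game problem on $\mathbb{Z}^d$ (given a finite alphabet $\mathcal{A}$ and a finite set $\mathcal{F}$ of finite patterns on $\mathbb{Z}^d$, decide whether player $A$ has a winning strategy in $\Gamma(\mathcal{A},\mathcal{F},\mathbb{Z}^d)$) is in $\Sigma^0_1$, i.e. is recursively enumerable.
   Context: Fix $d\ge 1$ and a finite alphabet $\mathcal{A}$. A pattern is a pair $p=(S,f)$ with $S\subseteq\mathbb{Z}^d$ (its support) and $f\in\mathcal{A}^S$. A finite pattern $q=(S',g)$ appears in a pattern $p=(S,f)$ if there is $v\in\mathbb{Z}^d$ with $v+S'\subseteq S$ and $f(v+j)=g(j)$ for all $j\in S'$. For a finite set $\mathcal{F}$ of finite patterns and $E\subseteq\mathbb{Z}^d$, the Domino game $\Gamma(\mathcal{A},\mathcal{F},E)$ is played by two players $A$ and $B$ who alternate turns, $A$ moving first, starting from the empty pattern. On each turn the current player either passes, or chooses a cell $i\in E$ not yet coloured and a colour $a\in\mathcal{A}$ and colours $i$ with $a$. As soon as some pattern of $\mathcal{F}$ appears in the current pattern, the game ends and $A$ wins; the game also ends if all of $E$ is coloured. $B$ wins if no pattern of $\mathcal{F}$ ever appears. A strategy is winning for a player if that player wins every game in which they follow it. *)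

theory Defs
  imports Main "HOL-Library.Nat_Bijection"
begin

datatype recf = Zero | Succ | Proj nat | Comp recf "recf list"
  | PrimRec recf recf | Mini recf

inductive eval :: "recf \<Rightarrow> nat list \<Rightarrow> nat \<Rightarrow> bool" where
  eval_Zero: "eval Zero xs 0"
| eval_Succ: "eval Succ (x # xs) (Suc x)"
| eval_Proj: "i < length xs \<Longrightarrow> eval (Proj i) xs (xs ! i)"
| eval_Comp: "list_all2 (\<lambda>g y. eval g xs y) gs ys \<Longrightarrow> eval f ys z \<Longrightarrow> eval (Comp f gs) xs z"
| eval_Prim0: "eval f xs y \<Longrightarrow> eval (PrimRec f g) (0 # xs) y"
| eval_PrimS: "eval (PrimRec f g) (n # xs) y \<Longrightarrow> eval g (n # y # xs) z
     \<Longrightarrow> eval (PrimRec f g) (Suc n # xs) z"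
| eval_Mini: "eval f (y # xs) 0 \<Longrightarrow> (\<forall>z<y. \<exists>w. eval f (z # xs) (Suc w))
     \<Longrightarrow> eval (Mini f) xs y"

definition r_e :: "nat set \<Rightarrow> bool" where
  "r_e S \<longleftrightarrow> (\<exists>f. \<forall>n. n \<in> S \<longleftrightarrow> (\<exists>y. eval f [n] y))"

text \<open>Cells of Z^d are int lists of length d; the alphabet is {0..<k};
  a finite pattern is represented as a list of (cell, colour) pairs.\<close>

type_synonym cell = "int list"
type_synonym fpattern = "(cell \<times> nat) list"

definition wf_pattern :: "nat \<Rightarrow> nat \<Rightarrow> fpattern \<Rightarrow> bool" where
  "wf_pattern d k q \<longleftrightarrow> distinct (map fst q) \<and> (\<forall>(j, a) \<in> set q. length j = d \<and> a < k)"

definition wf_instance :: "nat \<Rightarrow> nat \<Rightarrow> fpattern list \<Rightarrow> bool" where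
  "wf_instance d k F \<longleftrightarrow> (\<forall>q \<in> set F. wf_pattern d k q)"

definition appears :: "nat \<Rightarrow> fpattern \<Rightarrow> (cell \<rightharpoonup> nat) \<Rightarrow> bool" where
  "appears d q p \<longleftrightarrow> (\<exists>v. length v = d \<and> (\<forall>(j, a) \<in> set q. p (map2 (+) v j) = Some a))"

datatype move = Pass | Col cell nat

fun legal :: "nat \<Rightarrow> nat \<Rightarrow> (cell \<rightharpoonup> nat) \<Rightarrow> move \<Rightarrow> bool" where
  "legal d k p Pass = True"
| "legal d k p (Col c a) = (length c = d \<and> c \<notin> dom p \<and> a < k)"

fun pos :: "(nat \<Rightarrow> move) \<Rightarrow> nat \<Rightarrow> (cell \<rightharpoonup> nat)" where
  "pos m 0 = Map.empty"
| "pos m (Suc n) = (case m n of Pass \<Rightarrow> pos m n | Col c a \<Rightarrow> (pos m n)(c \<mapsto> a))"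

text \<open>Player A (moving at even times 0,2,4,...) has a winning strategy in
  Gamma({0..<k}, F, Z^d): a strategy (function of the history) such that in every
  play where A follows it and B plays legally, all moves are legal until some
  pattern of F appears.\<close>
definition A_wins :: "nat \<Rightarrow> nat \<Rightarrow> fpattern list \<Rightarrow> bool" where
  "A_wins d k F \<longleftrightarrow> (\<exists>\<sigma> :: move list \<Rightarrow> move. \<forall>m :: nat \<Rightarrow> move.
     (\<forall>i. m (2*i) = \<sigma> (map m [0..<2*i])) \<and>
     (\<forall>i. legal d k (pos m (2*i+1)) (m (2*i+1)))
     \<longrightarrow> (\<exists>n. (\<forall>i<n. legal d k (pos m i) (m i)) \<and> (\<exists>q \<in> set F. appears d q (pos m n))))"

definition code_cell :: "cell \<Rightarrow> nat" where
  "code_cell c = list_encode (map int_encode c)"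

definition code_pattern :: "fpattern \<Rightarrow> nat" where
  "code_pattern q = list_encode (map (\<lambda>(c, a). prod_encode (code_cell c, a)) q)"

definition code_instance :: "nat \<Rightarrow> fpattern list \<Rightarrow> nat" where
  "code_instance k F = prod_encode (k, list_encode (map code_pattern F))"

definition domino_problem :: "nat \<Rightarrow> nat set" where
  "domino_problem d = {code_instance k F | k F. wf_instance d k F \<and> A_wins d k F}"

end

theory Submission
  imports Defs "HOL-Library.More_List"
begin

(* Compactness: if A has a winning strategy on Z^d, then A already wins the game in which
   both players may only colour cells of some finite ball. Otherwise B survives in every
   ball game; following B's surviving replies along an infinite set of radii, B either copies
   a reply shared by infinitely many radii or, if the replies escape to infinity, passes.
   The limit play is legal, follows A's strategy, and never shows a forbidden pattern.
   A win in a finite ball is witnessed by a finite tree of histories, and checking such a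
   tree is primitive recursive. Hence the problem is the projection of a primitive recursive
   relation, i.e. recursively enumerable. *)

section \<open>Positions and plays\<close>

fun play :: "move \<Rightarrow> (cell \<rightharpoonup> nat) \<Rightarrow> (cell \<rightharpoonup> nat)" where
  "play Pass p = p"
| "play (Col c a) p = p(c \<mapsto> a)"

(* Histories list the most recent move first. *)
definition hist_pos :: "move list \<Rightarrow> (cell \<rightharpoonup> nat)" where
  "hist_pos h = foldr play h Map.empty"

lemma hist_pos_simps [simp]:
  "hist_pos [] = Map.empty"
  "hist_pos (b # h) = play b (hist_pos h)"
  by (simp_all add: hist_pos_def)

lemma pos_Suc_play: "pos m (Suc n) = play (m n) (pos m n)"
  by (cases "m n") simp_all

lemma pos_eq_hist_pos: "pos m n = hist_pos (rev (map m [0..<n]))"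
  by (induction n) (simp_all only: pos.simps(1) pos_Suc_play, simp_all)

fun legal_hist :: "nat \<Rightarrow> nat \<Rightarrow> move list \<Rightarrow> bool" where
  "legal_hist d k [] = True"
| "legal_hist d k (b # h) \<longleftrightarrow> legal_hist d k h \<and> legal d k (hist_pos h) b"

lemma legal_hist_play_prefix:
  "legal_hist d k (rev (map m [0..<n])) \<longleftrightarrow> (\<forall>i<n. legal d k (pos m i) (m i))"
  by (induction n) (auto simp: pos_eq_hist_pos less_Suc_eq)

lemma legal_antimono: "dom p \<subseteq> dom p' \<Longrightarrow> legal d k p' b \<Longrightarrow> legal d k p b"
  by (cases b) auto

lemma map_le_play: "legal d k p b \<Longrightarrow> p \<subseteq>\<^sub>m play b p"
  by (cases b) (auto simp: map_le_def)

lemma pos_mono: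
  assumes "\<forall>j<n'. legal d k (pos m j) (m j)" "n \<le> n'"
  shows "pos m n \<subseteq>\<^sub>m pos m n'"
  using assms
proof (induction n')
  case (Suc n')
  then show ?case
    by (metis le_Suc_eq less_SucI lessI map_le_play map_le_refl map_le_trans pos_Suc_play)
qed simp

definition has_pattern :: "nat \<Rightarrow> fpattern list \<Rightarrow> (cell \<rightharpoonup> nat) \<Rightarrow> bool" where
  "has_pattern d F p \<longleftrightarrow> (\<exists>q\<in>set F. appears d q p)"

lemma has_pattern_mono: "has_pattern d F p \<Longrightarrow> p \<subseteq>\<^sub>m p' \<Longrightarrow> has_pattern d F p'"
  unfolding has_pattern_def appears_def map_le_def by (fastforce simp: dom_def)

definition moves :: "nat \<Rightarrow> cell set \<Rightarrow> move set" where
  "moves k E = insert Pass {Col x a | x a. x \<in> E \<and> a < k}"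

lemma finite_moves: "finite E \<Longrightarrow> finite (moves k E)"
proof -
  assume "finite E"
  have "moves k E = insert Pass ((\<lambda>(x, a). Col x a) ` (E \<times> {..<k}))"
    unfolding moves_def by auto
  then show ?thesis using \<open>finite E\<close> by simp
qed

inductive A_wins_within for d k :: nat and F :: "fpattern list" and E :: "cell set" where
  pattern: "has_pattern d F p \<Longrightarrow> A_wins_within d k F E p"
| move: "a \<in> moves k E \<Longrightarrow> legal d k p a \<Longrightarrow>
    (\<And>b. b \<in> moves k E \<Longrightarrow> legal d k (play a p) b \<Longrightarrow> A_wins_within d k F E (play b (play a p)))
    \<Longrightarrow> A_wins_within d k F E p"

lemma B_has_reply:
  assumes "\<not> A_wins_within d k F E p" "a \<in> moves k E" "legal d k p a"
  obtains b where "b \<in> moves k E" "legal d k (play a p) b"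
    "\<not> A_wins_within d k F E (play b (play a p))"
  using assms A_wins_within.move by blast

section \<open>Compactness: A wins inside a ball\<close>

definition cell_norm :: "cell \<Rightarrow> nat" where
  "cell_norm x = (\<Sum>z\<leftarrow>x. nat \<bar>z\<bar>)"

definition ball :: "nat \<Rightarrow> nat \<Rightarrow> cell set" where
  "ball d R = {x. length x = d \<and> cell_norm x \<le> R}"

lemma finite_ball: "finite (ball d R)"
proof (rule finite_subset)
  have "nat \<bar>z\<bar> \<le> cell_norm x" if "z \<in> set x" for z x
    using that unfolding cell_norm_def by (induction x) auto
  then show "ball d R \<subseteq> {x. set x \<subseteq> {- int R..int R} \<and> length x = d}"
    unfolding ball_def by fastforce
  show "finite {x. set x \<subseteq> {- int R..int R} \<and> length x = d}"
    by (rule finite_lists_length_eq) simp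
qed

fun move_norm :: "move \<Rightarrow> nat" where
  "move_norm Pass = 0"
| "move_norm (Col x a) = cell_norm x"

lemma short_move_in_ball: "b \<in> moves k (ball d R) \<Longrightarrow> move_norm b \<le> D \<Longrightarrow> b \<in> moves k (ball d D)"
  unfolding moves_def ball_def by auto

lemma move_norm_new_cell: "x \<in> dom (play b p) \<Longrightarrow> x \<notin> dom p \<Longrightarrow> move_norm b = cell_norm x"
  by (cases b) (auto split: if_splits)

(* The positions p R of the games on the balls of radii R \<in> S approximate the real position q:
   they extend q, and their extra cells leave every bounded region as R grows. *)
definition converges_to :: "nat set \<Rightarrow> (nat \<Rightarrow> (cell \<rightharpoonup> nat)) \<Rightarrow> (cell \<rightharpoonup> nat) \<Rightarrow> bool" where
  "converges_to S p q \<longleftrightarrow> infinite S \<and> (\<forall>R\<in>S. q \<subseteq>\<^sub>m p R) \<and>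
     (\<forall>D. finite {R\<in>S. \<exists>x \<in> dom (p R) - dom q. cell_norm x \<le> D})"

lemma converges_to_subset:
  assumes conv: "converges_to S p q" and "S' \<subseteq> S" "infinite S'"
  shows "converges_to S' p q"
  unfolding converges_to_def
proof (intro conjI allI)
  fix D
  have "{R\<in>S'. \<exists>x \<in> dom (p R) - dom q. cell_norm x \<le> D}
      \<subseteq> {R\<in>S. \<exists>x \<in> dom (p R) - dom q. cell_norm x \<le> D}"
    using \<open>S' \<subseteq> S\<close> by blast
  then show "finite {R\<in>S'. \<exists>x \<in> dom (p R) - dom q. cell_norm x \<le> D}"
    using conv unfolding converges_to_def by (blast intro: finite_subset)
qed (use assms in \<open>auto simp: converges_to_def\<close>)

lemma converges_to_play:
  assumes conv: "converges_to S p q"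
  shows "converges_to S (\<lambda>R. play b (p R)) (play b q)"
proof (cases b)
  case (Col c a)
  show ?thesis
    unfolding converges_to_def Col play.simps
  proof (intro conjI ballI allI)
    show "infinite S" using conv unfolding converges_to_def by simp
    show "q(c \<mapsto> a) \<subseteq>\<^sub>m (p R)(c \<mapsto> a)" if "R \<in> S" for R
      using conv that unfolding converges_to_def map_le_def by auto
    fix D
    have "{R\<in>S. \<exists>x \<in> dom ((p R)(c \<mapsto> a)) - dom (q(c \<mapsto> a)). cell_norm x \<le> D}
        \<subseteq> {R\<in>S. \<exists>x \<in> dom (p R) - dom q. cell_norm x \<le> D}"
      by auto
    then show "finite {R\<in>S. \<exists>x \<in> dom ((p R)(c \<mapsto> a)) - dom (q(c \<mapsto> a)). cell_norm x \<le> D}"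
      using conv unfolding converges_to_def by (blast intro: finite_subset)
  qed
qed (use conv in simp)

lemma converges_to_far_moves:
  assumes conv: "converges_to S p q" and legal: "\<forall>R\<in>S. legal d k (p R) (b R)"
    and far: "\<forall>D. finite {R\<in>S. move_norm (b R) \<le> D}"
  shows "converges_to S (\<lambda>R. play (b R) (p R)) q"
  unfolding converges_to_def
proof (intro conjI ballI allI)
  show "infinite S" using conv unfolding converges_to_def by simp
  show "q \<subseteq>\<^sub>m play (b R) (p R)" if "R \<in> S" for R
    using conv that map_le_play[of d k "p R" "b R"] legal map_le_trans
    unfolding converges_to_def by blast
  fix D
  have "{R\<in>S. \<exists>x \<in> dom (play (b R) (p R)) - dom q. cell_norm x \<le> D}
      \<subseteq> {R\<in>S. \<exists>x \<in> dom (p R) - dom q. cell_norm x \<le> D} \<union> {R\<in>S. move_norm (b R) \<le> D}"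
    using move_norm_new_cell by fastforce
  moreover have "finite ({R\<in>S. \<exists>x \<in> dom (p R) - dom q. cell_norm x \<le> D} \<union>
      {R\<in>S. move_norm (b R) \<le> D})"
    using conv far unfolding converges_to_def by blast
  ultimately show "finite {R\<in>S. \<exists>x \<in> dom (play (b R) (p R)) - dom q. cell_norm x \<le> D}"
    by (rule finite_subset)
qed

lemma converges_to_move_available:
  assumes conv: "converges_to S p q" and legal: "legal d k q a"
  shows "finite {R\<in>S. \<not> (a \<in> moves k (ball d R) \<and> legal d k (p R) a)}"
proof (cases a)
  case Pass
  then show ?thesis by (simp add: moves_def)
next
  case (Col x c)
  have "{R\<in>S. \<not> (a \<in> moves k (ball d R) \<and> legal d k (p R) a)}
      \<subseteq> {..<cell_norm x} \<union> {R\<in>S. \<exists>y \<in> dom (p R) - dom q. cell_norm y \<le> cell_norm x}"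
    using legal Col by (auto simp: moves_def ball_def)
  moreover have "finite ({..<cell_norm x} \<union>
      {R\<in>S. \<exists>y \<in> dom (p R) - dom q. cell_norm y \<le> cell_norm x})"
    using conv unfolding converges_to_def by blast
  ultimately show ?thesis by (rule finite_subset)
qed

context
  fixes d k :: nat and F :: "fpattern list"
begin

definition B_survives :: "nat set \<Rightarrow> (nat \<Rightarrow> (cell \<rightharpoonup> nat)) \<Rightarrow> (cell \<rightharpoonup> nat) \<Rightarrow> bool" where
  "B_survives S p q \<longleftrightarrow> converges_to S p q \<and> (\<forall>R\<in>S. \<not> A_wins_within d k F (ball d R) (p R))"

lemma B_survives_no_pattern:
  assumes "B_survives S p q"
  shows "\<not> has_pattern d F q"
proof
  assume q: "has_pattern d F q"
  obtain R where "R \<in> S" using assms unfolding B_survives_def converges_to_def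
    by (metis finite.emptyI ex_in_conv)
  with assms have "q \<subseteq>\<^sub>m p R" "\<not> A_wins_within d k F (ball d R) (p R)"
    unfolding B_survives_def converges_to_def by auto
  with q show False using has_pattern_mono A_wins_within.pattern by blast
qed

lemma B_survives_round:
  assumes surv: "B_survives S p q" and a: "legal d k q a"
  shows "\<exists>b S' p'. legal d k (play a q) b \<and> B_survives S' p' (play b (play a q))"
proof -
  have conv: "converges_to S p q" and lose: "\<forall>R\<in>S. \<not> A_wins_within d k F (ball d R) (p R)"
    using surv unfolding B_survives_def by auto
  define S1 where "S1 = {R\<in>S. a \<in> moves k (ball d R) \<and> legal d k (p R) a}"
  define p1 where "p1 R = play a (p R)" for R
  have "S = S1 \<union> {R\<in>S. \<not> (a \<in> moves k (ball d R) \<and> legal d k (p R) a)}"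
    unfolding S1_def by blast
  then have "infinite S1"
    using conv converges_to_move_available[OF conv a] unfolding converges_to_def by (metis finite_Un)
  moreover have "S1 \<subseteq> S" unfolding S1_def by blast
  ultimately have conv1: "converges_to S1 p1 (play a q)"
    unfolding p1_def using converges_to_play converges_to_subset[OF conv] by blast
  have "\<forall>R\<in>S1. \<exists>b. b \<in> moves k (ball d R) \<and> legal d k (p1 R) b \<and>
      \<not> A_wins_within d k F (ball d R) (play b (p1 R))"
    using lose B_has_reply unfolding S1_def p1_def by (metis (no_types, lifting) mem_Collect_eq)
  then obtain b where b: "\<And>R. R \<in> S1 \<Longrightarrow> b R \<in> moves k (ball d R) \<and> legal d k (p1 R) (b R) \<and>
      \<not> A_wins_within d k F (ball d R) (play (b R) (p1 R))"
    by metis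
  show ?thesis
  proof (cases "\<exists>D. infinite {R\<in>S1. move_norm (b R) \<le> D}")
    case True
    txt \<open>Infinitely many of the replies lie in a fixed ball: B copies one of them.\<close>
    then obtain D where "infinite {R\<in>S1. move_norm (b R) \<le> D}" by blast
    moreover have "b ` {R\<in>S1. move_norm (b R) \<le> D} \<subseteq> moves k (ball d D)"
      using b short_move_in_ball by blast
    then have "finite (b ` {R\<in>S1. move_norm (b R) \<le> D})"
      using finite_moves[OF finite_ball] by (rule finite_subset)
    ultimately obtain R1 where "infinite {R \<in> {R\<in>S1. move_norm (b R) \<le> D}. b R = b R1}"
      using pigeonhole_infinite by blast
    define b0 where "b0 = b R1"
    define S' where "S' = {R \<in> {R\<in>S1. move_norm (b R) \<le> D}. b R = b0}"
    have S': "infinite S'" "S' \<subseteq> S1"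
      unfolding S'_def b0_def by fact auto
    have b0: "legal d k (p1 R) b0 \<and> \<not> A_wins_within d k F (ball d R) (play b0 (p1 R))"
      if "R \<in> S'" for R
      using that b[of R] unfolding S'_def by auto
    obtain R0 where "R0 \<in> S'" using S' by (metis finite.emptyI ex_in_conv)
    then have "play a q \<subseteq>\<^sub>m p1 R0" using conv1 S' unfolding converges_to_def by blast
    then have "legal d k (play a q) b0"
      using b0[OF \<open>R0 \<in> S'\<close>] legal_antimono map_le_implies_dom_le by blast
    moreover have "B_survives S' (\<lambda>R. play b0 (p1 R)) (play b0 (play a q))"
      using converges_to_play[OF converges_to_subset[OF conv1 S'(2,1)]] b0
      unfolding B_survives_def by blast
    ultimately show ?thesis by blast
  next
    case False
    txt \<open>The replies escape to infinity: B passes, and they vanish in the limit.\<close>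
    then have "converges_to S1 (\<lambda>R. play (b R) (p1 R)) (play a q)"
      using b by (intro converges_to_far_moves[OF conv1]) auto
    then have "B_survives S1 (\<lambda>R. play (b R) (p1 R)) (play Pass (play a q))"
      using b unfolding B_survives_def by simp
    then show ?thesis by (intro exI[of _ Pass]) auto
  qed
qed

lemma B_survival_histories:
  assumes "B_survives S0 p0 Map.empty"
  shows "\<exists>f. f 0 = [] \<and>
    (\<forall>i. \<exists>b. f (Suc i) = b # \<sigma> (rev (f i)) # f i \<and> legal d k (hist_pos (\<sigma> (rev (f i)) # f i)) b) \<and>
    (\<forall>i. legal_hist d k (f i) \<longrightarrow> \<not> has_pattern d F (hist_pos (f i)))"
proof -
  define alive where "alive n h \<longleftrightarrow> length h = 2 * n \<and>
      (legal_hist d k h \<longrightarrow> (\<exists>S p. B_survives S p (hist_pos h)))" for n h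
  define B_answers where "B_answers h h' \<longleftrightarrow>
      (\<exists>b. h' = b # \<sigma> (rev h) # h \<and> legal d k (hist_pos (\<sigma> (rev h) # h)) b)" for h h'
  have "\<exists>f. \<forall>n. alive n (f n) \<and> B_answers (f n) (f (Suc n))"
  proof (rule dependent_nat_choice)
    show "\<exists>h. alive 0 h" using assms unfolding alive_def by auto
  next
    fix h n assume h: "alive n h"
    define a where "a = \<sigma> (rev h)"
    show "\<exists>h'. alive (Suc n) h' \<and> B_answers h h'"
    proof (cases "legal_hist d k (a # h)")
      case True
      then obtain S p where "B_survives S p (hist_pos h)" "legal d k (hist_pos h) a"
        using h unfolding alive_def by auto
      then obtain b S' p' where b: "legal d k (hist_pos (a # h)) b"
          and "B_survives S' p' (hist_pos (b # a # h))"
        using B_survives_round by fastforce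
      then have "alive (Suc n) (b # a # h)" using h unfolding alive_def by auto
      moreover have "B_answers h (b # a # h)" using b unfolding B_answers_def a_def by blast
      ultimately show ?thesis by blast
    next
      case False
      then have "alive (Suc n) (Pass # a # h)" using h unfolding alive_def by auto
      moreover have "B_answers h (Pass # a # h)" unfolding B_answers_def a_def by auto
      ultimately show ?thesis by blast
    qed
  qed
  then obtain f where "\<And>n. alive n (f n)" "\<And>n. B_answers (f n) (f (Suc n))" by blast
  then show ?thesis
    unfolding alive_def B_answers_def using B_survives_no_pattern by (metis length_0_conv mult_0_right)
qed

end

lemma interleave_rounds:
  assumes "f 0 = []" "\<And>i. f (Suc i) = y i # x i # f i"
  shows "map (\<lambda>j. if even j then x (j div 2) else y (j div 2)) [0..<2*i] = rev (f i)"
proof (induction i)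
  case (Suc i)
  have "[0..<2 * Suc i] = [0..<2*i] @ [2*i, 2*i+1]" by (simp add: upt_add_eq_append)
  then show ?case using Suc assms(2)[of i] by simp
qed (simp add: assms(1))

lemma no_pattern_between_rounds:
  assumes rounds: "\<And>i. map m [0..<2*i] = rev (f i)"
    and B_legal: "\<And>i. legal d k (pos m (2*i+1)) (m (2*i+1))"
    and safe: "\<And>i. legal_hist d k (f i) \<Longrightarrow> \<not> has_pattern d F (hist_pos (f i))"
    and legal: "\<forall>i<n. legal d k (pos m i) (m i)"
  shows "\<not> has_pattern d F (pos m n)"
proof -
  define i where "i = Suc n div 2"
  have "legal d k (pos m j) (m j)" if "j < 2*i" for j
  proof (cases "j < n")
    case False
    with that have "j = 2 * (n div 2) + 1" unfolding i_def by presburger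
    then show ?thesis using B_legal by metis
  qed (use legal in blast)
  moreover have "n \<le> 2*i" unfolding i_def by presburger
  ultimately have "legal_hist d k (f i)" "pos m n \<subseteq>\<^sub>m hist_pos (f i)"
    using legal_hist_play_prefix[of d k m "2*i"] pos_mono[of "2*i" d k m n]
    by (simp_all add: rounds pos_eq_hist_pos[of m "2*i"])
  then show ?thesis using safe has_pattern_mono by blast
qed

theorem A_wins_imp_A_wins_within_ball:
  assumes "A_wins d k F"
  shows "\<exists>R. A_wins_within d k F (ball d R) Map.empty"
proof (rule ccontr)
  assume "\<nexists>R. A_wins_within d k F (ball d R) Map.empty"
  then have surv: "B_survives d k F UNIV (\<lambda>R. Map.empty) Map.empty"
    unfolding B_survives_def converges_to_def by simp
  obtain \<sigma> where \<sigma>: "\<And>m. \<forall>i. m (2*i) = \<sigma> (map m [0..<2*i]) \<Longrightarrow>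
      \<forall>i. legal d k (pos m (2*i+1)) (m (2*i+1)) \<Longrightarrow>
      \<exists>n. (\<forall>i<n. legal d k (pos m i) (m i)) \<and> has_pattern d F (pos m n)"
    using assms unfolding A_wins_def has_pattern_def by blast
  obtain f b where f0: "f 0 = []"
    and b: "\<And>i. f (Suc i) = b i # \<sigma> (rev (f i)) # f i"
      "\<And>i. legal d k (hist_pos (\<sigma> (rev (f i)) # f i)) (b i)"
    and safe: "\<And>i. legal_hist d k (f i) \<Longrightarrow> \<not> has_pattern d F (hist_pos (f i))"
    using B_survival_histories[OF surv, of \<sigma>] by metis
  define m where "m j = (if even j then \<sigma> (rev (f (j div 2))) else b (j div 2))" for j
  have rounds: "map m [0..<2*i] = rev (f i)" for i
    unfolding m_def using interleave_rounds[OF f0 b(1)] .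
  have B_legal: "legal d k (pos m (2*i+1)) (m (2*i+1))" for i
    using b(2)[of i] by (simp add: pos_eq_hist_pos rounds m_def)
  have "m (2*i) = \<sigma> (map m [0..<2*i])" for i
    by (simp add: m_def rounds)
  with \<sigma>[of m] B_legal obtain n where "\<forall>i<n. legal d k (pos m i) (m i)" "has_pattern d F (pos m n)"
    by blast
  with no_pattern_between_rounds[OF rounds B_legal safe] show False by blast
qed

section \<open>Finite winning trees and certificates\<close>

definition tree_move :: "nat \<Rightarrow> nat \<Rightarrow> cell set \<Rightarrow> move list set \<Rightarrow> move list \<Rightarrow> move \<Rightarrow> bool" where
  "tree_move d k E T t a \<longleftrightarrow> a \<in> moves k E \<and> legal d k (hist_pos t) a \<and>
     (\<forall>b\<in>moves k E. legal d k (hist_pos (a # t)) b \<longrightarrow> b # a # t \<in> T)"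

definition closed_tree :: "nat \<Rightarrow> nat \<Rightarrow> fpattern list \<Rightarrow> cell set \<Rightarrow> move list set \<Rightarrow> bool" where
  "closed_tree d k F E T \<longleftrightarrow>
     (\<forall>t\<in>T. legal_hist d k t \<longrightarrow> has_pattern d F (hist_pos t) \<or> (\<exists>a. tree_move d k E T t a))"

lemma tree_move_mono: "T \<subseteq> T' \<Longrightarrow> tree_move d k E T t a \<Longrightarrow> tree_move d k E T' t a"
  unfolding tree_move_def by blast

lemma A_wins_within_imp_closed_tree:
  assumes "A_wins_within d k F E (hist_pos h)" "finite E" "legal_hist d k h"
  shows "\<exists>T. finite T \<and> h \<in> T \<and> (\<forall>t\<in>T. legal_hist d k t) \<and> closed_tree d k F E T"
  using assms
proof (induction "hist_pos h" arbitrary: h rule: A_wins_within.induct)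
  case pattern
  then show ?case unfolding closed_tree_def by (intro exI[of _ "{h}"]) auto
next
  case (move a h)
  define B where "B = {b \<in> moves k E. legal d k (hist_pos (a # h)) b}"
  have "\<forall>b\<in>B. \<exists>T. finite T \<and> b # a # h \<in> T \<and> (\<forall>t\<in>T. legal_hist d k t) \<and> closed_tree d k F E T"
    using move unfolding B_def by auto
  then obtain T where T: "\<And>b. b \<in> B \<Longrightarrow> finite (T b) \<and> b # a # h \<in> T b \<and>
      (\<forall>t\<in>T b. legal_hist d k t) \<and> closed_tree d k F E (T b)"
    by metis
  define T' where "T' = insert h (\<Union>b\<in>B. T b)"
  have "finite B" unfolding B_def using finite_moves[OF \<open>finite E\<close>] by simp
  then have "finite T'" unfolding T'_def using T by blast
  moreover have "closed_tree d k F E T'"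
    unfolding closed_tree_def
  proof (intro ballI impI)
    fix t assume "t \<in> T'" "legal_hist d k t"
    then consider "t = h" | b where "b \<in> B" "t \<in> T b" unfolding T'_def by blast
    then show "has_pattern d F (hist_pos t) \<or> (\<exists>a. tree_move d k E T' t a)"
    proof cases
      case 1
      have "tree_move d k E T' h a"
        using move.hyps(1,2) T unfolding tree_move_def T'_def B_def by fastforce
      with 1 show ?thesis by blast
    next
      case 2
      then have "T b \<subseteq> T'" unfolding T'_def by blast
      with 2 T[of b] \<open>legal_hist d k t\<close> show ?thesis
        unfolding closed_tree_def using tree_move_mono by blast
    qed
  qed
  ultimately show ?case using move.prems T unfolding T'_def by blast
qed

fun restrict_move :: "cell set \<Rightarrow> move \<Rightarrow> move" where
  "restrict_move E Pass = Pass"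
| "restrict_move E (Col x a) = (if x \<in> E then Col x a else Pass)"

lemma hist_pos_restrict_move: "hist_pos (map (restrict_move E) h) = hist_pos h |` E"
proof (induction h)
  case (Cons b h)
  then show ?case by (cases b) (auto simp: restrict_map_def fun_eq_iff)
qed simp

lemma restrict_move_legal:
  "legal d k p b \<Longrightarrow> restrict_move E b \<in> moves k E \<and> legal d k (p |` E) (restrict_move E b)"
  by (cases b) (auto simp: moves_def)

lemma legal_hist_restrict_move: "legal_hist d k h \<Longrightarrow> legal_hist d k (map (restrict_move E) h)"
  by (induction h) (simp_all add: hist_pos_restrict_move restrict_move_legal)

lemma restrict_map_le: "p |` E \<subseteq>\<^sub>m p"
  by (auto simp: map_le_def)

lemma play_restrict_map: "a \<in> moves k E \<Longrightarrow> play a (p |` E) = play a p |` E"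
  by (auto simp: moves_def)

lemma restrict_move_id: "a \<in> moves k E \<Longrightarrow> restrict_move E a = a"
  by (auto simp: moves_def)

lemma legal_restrict_map: "a \<in> moves k E \<Longrightarrow> legal d k (p |` E) a \<Longrightarrow> legal d k p a"
  by (auto simp: moves_def)

(* A only looks at the cells of E: B's moves outside E are read as passes. *)
definition tree_strategy :: "nat \<Rightarrow> nat \<Rightarrow> cell set \<Rightarrow> move list set \<Rightarrow> move list \<Rightarrow> move" where
  "tree_strategy d k E T hist = (SOME a. tree_move d k E T (map (restrict_move E) (rev hist)) a)"

lemma tree_strategy_stays_in_tree:
  assumes closed: "closed_tree d k F E T" and "[] \<in> T"
    and A_moves: "\<forall>i. m (2*i) = tree_strategy d k E T (map m [0..<2*i])"
    and B_moves: "\<forall>i. legal d k (pos m (2*i+1)) (m (2*i+1))"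
    and no_win: "\<nexists>n. (\<forall>i<n. legal d k (pos m i) (m i)) \<and> has_pattern d F (pos m n)"
  shows "map (restrict_move E) (rev (map m [0..<2*i])) \<in> T \<and> (\<forall>j<2*i. legal d k (pos m j) (m j))"
proof (induction i)
  case 0
  show ?case using \<open>[] \<in> T\<close> by simp
next
  case (Suc i)
  define r where "r = map (restrict_move E) (rev (map m [0..<2*i]))"
  have r_pos: "hist_pos r = pos m (2*i) |` E"
    unfolding r_def by (simp add: hist_pos_restrict_move pos_eq_hist_pos)
  have "legal_hist d k r"
    using Suc legal_hist_restrict_move unfolding r_def by (simp add: legal_hist_play_prefix)
  moreover have "\<not> has_pattern d F (hist_pos r)"
    using no_win Suc r_pos has_pattern_mono restrict_map_le by metis
  ultimately have "\<exists>a. tree_move d k E T r a" using closed Suc unfolding closed_tree_def r_def by blast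
  then have a: "tree_move d k E T r (m (2*i))"
    using A_moves unfolding tree_strategy_def r_def by (metis someI_ex)
  then have a_move: "m (2*i) \<in> moves k E" unfolding tree_move_def by blast
  have "legal d k (pos m (2*i)) (m (2*i))"
    using a legal_restrict_map r_pos unfolding tree_move_def by metis
  moreover have "hist_pos (m (2*i) # r) = pos m (2*i+1) |` E"
    using a_move by (simp del: pos.simps add: r_pos pos_Suc_play play_restrict_map)
  then have "restrict_move E (m (2*i+1)) # m (2*i) # r \<in> T"
    using a restrict_move_legal B_moves unfolding tree_move_def by metis
  moreover have "map (restrict_move E) (rev (map m [0..<2 * Suc i])) =
      restrict_move E (m (2*i+1)) # m (2*i) # r"
    by (simp add: r_def restrict_move_id[OF a_move])
  ultimately show ?case
    using Suc B_moves by (auto simp: less_Suc_eq)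
qed

lemma closed_tree_imp_A_wins:
  assumes "finite T" "[] \<in> T" "closed_tree d k F E T"
  shows "A_wins d k F"
proof -
  have "\<exists>n. (\<forall>i<n. legal d k (pos m i) (m i)) \<and> has_pattern d F (pos m n)"
    if "\<forall>i. m (2*i) = tree_strategy d k E T (map m [0..<2*i])"
      and "\<forall>i. legal d k (pos m (2*i+1)) (m (2*i+1))" for m
  proof (rule ccontr)
    let ?L = "Max (length ` T)"
    assume "\<nexists>n. (\<forall>i<n. legal d k (pos m i) (m i)) \<and> has_pattern d F (pos m n)"
    then have "map (restrict_move E) (rev (map m [0..<2 * Suc ?L])) \<in> T"
      using tree_strategy_stays_in_tree assms(2,3) that by blast
    then show False using \<open>finite T\<close> Max_ge[of "length ` T"] by fastforce
  qed
  then show ?thesis unfolding A_wins_def has_pattern_def by blast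
qed

fun fresh :: "move \<Rightarrow> move list \<Rightarrow> bool" where
  "fresh Pass h \<longleftrightarrow> True"
| "fresh (Col x a) h \<longleftrightarrow> (\<forall>c. Col x c \<notin> set h)"

lemma in_dom_hist_pos: "x \<in> dom (hist_pos h) \<longleftrightarrow> (\<exists>a. Col x a \<in> set h)"
proof (induction h)
  case (Cons b h)
  then show ?case by (cases b) auto
qed simp

lemma legal_iff_fresh:
  assumes "a \<in> moves k E" "\<forall>x\<in>E. length x = d"
  shows "legal d k (hist_pos h) a \<longleftrightarrow> fresh a h"
  using assms by (auto simp: moves_def in_dom_hist_pos)

lemma tree_move_iff_fresh:
  assumes "\<forall>x\<in>E. length x = d"
  shows "(\<exists>a. tree_move d k E T t a) \<longleftrightarrow>
    (\<exists>a\<in>moves k E. fresh a t \<and> (\<forall>b\<in>moves k E. fresh b (a # t) \<longrightarrow> b # a # t \<in> T))"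
  using assms by (auto simp: tree_move_def legal_iff_fresh[where d = d] simp del: hist_pos_simps)

lemma hist_pos_eq_Some_iff:
  assumes "legal_hist d k h"
  shows "hist_pos h x = Some a \<longleftrightarrow> Col x a \<in> set h"
  using assms
proof (induction h)
  case (Cons b h)
  then show ?case by (cases b) (auto simp: in_dom_hist_pos)
qed simp

lemma legal_hist_cell_length:
  assumes "legal_hist d k h" "Col x a \<in> set h"
  shows "length x = d"
  using assms by (induction h) auto

(* q, translated so that its first cell lands on x0, agrees with the colouring relation P.
   Using nth_default, the test also makes sense for cells of the wrong length, to which
   arbitrary codes may decode. *)
definition anchored_at :: "nat \<Rightarrow> fpattern \<Rightarrow> (cell \<Rightarrow> nat \<Rightarrow> bool) \<Rightarrow> cell \<Rightarrow> bool" where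
  "anchored_at d q P x0 \<longleftrightarrow> (\<forall>(j, a)\<in>set q. \<exists>x. P x a \<and>
     (\<forall>l<d. nth_default 0 x l + nth_default 0 (fst (hd q)) l = nth_default 0 x0 l + nth_default 0 j l))"

lemma appears_imp_anchored:
  assumes "appears d q p" "q \<noteq> []" and q_cells: "\<forall>(j, a)\<in>set q. length j = d"
  shows "\<exists>x0 a0. p x0 = Some a0 \<and> anchored_at d q (\<lambda>x a. p x = Some a) x0"
proof -
  obtain v where v: "length v = d" "\<forall>(j, a)\<in>set q. p (map2 (+) v j) = Some a"
    using assms(1) unfolding appears_def by blast
  define j0 where "j0 = fst (hd q)"
  have hd: "(j0, snd (hd q)) \<in> set q" using \<open>q \<noteq> []\<close> by (simp add: j0_def)
  have "p (map2 (+) v j) = Some a \<and> (\<forall>l<d. nth_default 0 (map2 (+) v j) l + nth_default 0 j0 l =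
      nth_default 0 (map2 (+) v j0) l + nth_default 0 j l)" if "(j, a) \<in> set q" for j a
    using bspec[OF v(2) that] bspec[OF q_cells that] bspec[OF q_cells hd] v(1)
    by (simp add: nth_default_nth)
  then have "anchored_at d q (\<lambda>x a. p x = Some a) (map2 (+) v j0)"
    unfolding anchored_at_def j0_def by blast
  moreover have "p (map2 (+) v j0) = Some (snd (hd q))" using bspec[OF v(2) hd] by simp
  ultimately show ?thesis by blast
qed

lemma anchored_imp_appears:
  assumes "p x0 = Some a0" "anchored_at d q (\<lambda>x a. p x = Some a) x0" "q \<noteq> []"
    and q_cells: "\<forall>(j, a)\<in>set q. length j = d" and p_cells: "\<forall>x\<in>dom p. length x = d"
  shows "appears d q p"
proof -
  define j0 where "j0 = fst (hd q)"
  have "(j0, snd (hd q)) \<in> set q" using \<open>q \<noteq> []\<close> by (simp add: j0_def)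
  then have j0_length: "length j0 = d" using q_cells by auto
  have x0_length: "length x0 = d" using assms(1) p_cells by blast
  define v where "v = map2 (-) x0 j0"
  have v_length: "length v = d" using x0_length j0_length by (simp add: v_def)
  have "p (map2 (+) v j) = Some a" if ja: "(j, a) \<in> set q" for j a
  proof -
    obtain x where x: "p x = Some a"
      "\<forall>l<d. nth_default 0 x l + nth_default 0 j0 l = nth_default 0 x0 l + nth_default 0 j l"
      using assms(2) ja unfolding anchored_at_def j0_def by blast
    have "length x = d" "length j = d" using x(1) p_cells bspec[OF q_cells ja] by auto
    then have "x = map2 (+) v j"
    proof (intro nth_equalityI)
      fix l assume "l < length x"
      with x(2) \<open>length x = d\<close> have "x ! l + j0 ! l = x0 ! l + j ! l"
        using \<open>length j = d\<close> x0_length j0_length by (simp add: nth_default_nth)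
      then show "x ! l = map2 (+) v j ! l"
        using \<open>l < length x\<close> \<open>length x = d\<close> \<open>length j = d\<close> x0_length j0_length
        by (auto simp: v_def)
    qed (simp add: v_length)
    then show ?thesis using x(1) by simp
  qed
  then show "appears d q p" unfolding appears_def using v_length by blast
qed

lemma appears_Nil: "appears d [] p"
  unfolding appears_def by (intro exI[of _ "replicate d 0"]) simp

definition occurs_in_hist :: "nat \<Rightarrow> fpattern list \<Rightarrow> move list \<Rightarrow> bool" where
  "occurs_in_hist d F h \<longleftrightarrow> (\<exists>q\<in>set F. q = [] \<or>
     (\<exists>x0 a0. Col x0 a0 \<in> set h \<and> anchored_at d q (\<lambda>x a. Col x a \<in> set h) x0))"

lemma occurs_in_hist_iff:
  assumes h: "legal_hist d k h" and F: "wf_instance d k F"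
  shows "occurs_in_hist d F h \<longleftrightarrow> has_pattern d F (hist_pos h)"
proof -
  have h_cells: "\<forall>x\<in>dom (hist_pos h). length x = d"
  proof
    fix x assume "x \<in> dom (hist_pos h)"
    then obtain a where "Col x a \<in> set h" using in_dom_hist_pos by blast
    then show "length x = d" by (rule legal_hist_cell_length[OF h])
  qed
  have colouring: "(\<lambda>x a. hist_pos h x = Some a) = (\<lambda>x a. Col x a \<in> set h)"
    using hist_pos_eq_Some_iff[OF h] by blast
  have "appears d q (hist_pos h) \<longleftrightarrow> q = [] \<or>
      (\<exists>x0 a0. Col x0 a0 \<in> set h \<and> anchored_at d q (\<lambda>x a. Col x a \<in> set h) x0)"
    if "q \<in> set F" for q
  proof (cases "q = []")
    case False
    have q_cells: "\<forall>(j, a)\<in>set q. length j = d"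
      using F that unfolding wf_instance_def wf_pattern_def by blast
    have "appears d q (hist_pos h) \<longleftrightarrow>
        (\<exists>x0 a0. hist_pos h x0 = Some a0 \<and> anchored_at d q (\<lambda>x a. hist_pos h x = Some a) x0)"
    proof
      assume "appears d q (hist_pos h)"
      then show "\<exists>x0 a0. hist_pos h x0 = Some a0 \<and> anchored_at d q (\<lambda>x a. hist_pos h x = Some a) x0"
        by (rule appears_imp_anchored[OF _ False q_cells])
    next
      assume "\<exists>x0 a0. hist_pos h x0 = Some a0 \<and> anchored_at d q (\<lambda>x a. hist_pos h x = Some a) x0"
      then show "appears d q (hist_pos h)"
        using anchored_imp_appears[OF _ _ False q_cells h_cells] by blast
    qed
    also have "\<dots> \<longleftrightarrow> (\<exists>x0 a0. Col x0 a0 \<in> set h \<and> anchored_at d q (\<lambda>x a. Col x a \<in> set h) x0)"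
      by (simp only: colouring hist_pos_eq_Some_iff[OF h])
    finally show ?thesis using False by simp
  qed (simp add: appears_Nil)
  then show ?thesis
    unfolding occurs_in_hist_def has_pattern_def by (intro bex_cong[OF refl]) simp
qed

definition is_certificate :: "nat \<Rightarrow> nat \<Rightarrow> fpattern list \<Rightarrow> cell list \<Rightarrow> move list list \<Rightarrow> bool" where
  "is_certificate d k F Es T \<longleftrightarrow> (\<forall>x\<in>set Es. length x = d) \<and> [] \<in> set T \<and>
     (\<forall>t\<in>set T. occurs_in_hist d F t \<or> (\<exists>a\<in>moves k (set Es). fresh a t \<and>
        (\<forall>b\<in>moves k (set Es). fresh b (a # t) \<longrightarrow> b # a # t \<in> set T)))"

theorem A_wins_iff_certificate:
  assumes F: "wf_instance d k F"
  shows "A_wins d k F \<longleftrightarrow> (\<exists>Es T. is_certificate d k F Es T)"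
proof
  assume "A_wins d k F"
  then obtain R where "A_wins_within d k F (ball d R) Map.empty"
    using A_wins_imp_A_wins_within_ball by blast
  then have "A_wins_within d k F (ball d R) (hist_pos [])" by simp
  from A_wins_within_imp_closed_tree[OF this finite_ball] obtain T where T: "finite T" "[] \<in> T"
      "\<forall>t\<in>T. legal_hist d k t" "closed_tree d k F (ball d R) T"
    by auto
  obtain Es where Es: "set Es = ball d R" using finite_list[OF finite_ball] by blast
  obtain Ts where Ts: "set Ts = T" using finite_list[OF T(1)] by blast
  have cells: "\<forall>x\<in>set Es. length x = d" using Es by (simp add: ball_def)
  have "is_certificate d k F Es Ts"
    using T cells occurs_in_hist_iff[OF _ F] tree_move_iff_fresh[OF cells]
    unfolding is_certificate_def closed_tree_def Es Ts by simp
  then show "\<exists>Es T. is_certificate d k F Es T" by blast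
next
  assume "\<exists>Es T. is_certificate d k F Es T"
  then obtain Es T where cert: "is_certificate d k F Es T" by blast
  then have cells: "\<forall>x\<in>set Es. length x = d" unfolding is_certificate_def by blast
  have "closed_tree d k F (set Es) (set T)"
    unfolding closed_tree_def
  proof (intro ballI impI)
    fix t assume "t \<in> set T" and legal: "legal_hist d k t"
    then have "occurs_in_hist d F t \<or> (\<exists>a\<in>moves k (set Es). fresh a t \<and>
        (\<forall>b\<in>moves k (set Es). fresh b (a # t) \<longrightarrow> b # a # t \<in> set T))"
      using cert unfolding is_certificate_def by blast
    then show "has_pattern d F (hist_pos t) \<or> (\<exists>a. tree_move d k (set Es) (set T) t a)"
      using occurs_in_hist_iff[OF legal F] tree_move_iff_fresh[OF cells] by simp
  qed
  then show "A_wins d k F"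
    using cert closed_tree_imp_A_wins unfolding is_certificate_def by blast
qed


section \<open>Primitive recursive expressions\<close>

(* Lift e and Lift1 e evaluate e without the environment entry 0, resp. 1, so that e can be
   used below a new binder. *)
datatype expr = Z | S expr | V nat | Rec expr expr expr | Lift expr | Lift1 expr | Bind expr expr

primrec ev :: "expr \<Rightarrow> nat list \<Rightarrow> nat" where
  "ev Z env = 0"
| "ev (S e) env = Suc (ev e env)"
| "ev (V i) env = (if i < length env then env ! i else 0)"
| "ev (Rec n b s) env = rec_nat (ev b env) (\<lambda>i r. ev s (i # r # env)) (ev n env)"
| "ev (Lift e) env = ev e (tl env)"
| "ev (Lift1 e) env = ev e (take 1 env @ drop 2 env)"
| "ev (Bind e b) env = ev b (ev e env # env)"

primrec compile :: "nat \<Rightarrow> expr \<Rightarrow> recf" where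
  "compile n Z = Zero"
| "compile n (S e) = Comp Succ [compile n e]"
| "compile n (V i) = (if i < n then Proj i else Zero)"
| "compile n (Rec m b s) =
     Comp (PrimRec (compile n b) (compile (Suc (Suc n)) s)) (compile n m # map Proj [0..<n])"
| "compile n (Lift e) = Comp (compile (n - 1) e) (map Proj [1..<n])"
| "compile n (Lift1 e) = Comp (compile (min n 1 + (n - 2)) e) (map Proj ([0..<min n 1] @ [2..<n]))"
| "compile n (Bind e b) = Comp (compile (Suc n) b) (compile n e # map Proj [0..<n])"

inductive_cases eval_ZeroE: "eval Zero xs y"
inductive_cases eval_SuccE: "eval Succ xs y"
inductive_cases eval_ProjE: "eval (Proj i) xs y"
inductive_cases eval_CompE: "eval (Comp f gs) xs y"
inductive_cases eval_PrimRecE: "eval (PrimRec f g) xs y"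
inductive_cases eval_MiniE: "eval (Mini f) xs y"

lemma eval_Projs:
  assumes "\<forall>i\<in>set ps. i < length xs"
  shows "list_all2 (\<lambda>g y. eval g xs y) (map Proj ps) ys \<longleftrightarrow> ys = map (nth xs) ps"
  using assms
proof (induction ps arbitrary: ys)
  case (Cons i ps)
  have "eval (Proj i) xs y \<longleftrightarrow> y = xs ! i" for y
    using Cons.prems by (auto elim: eval_ProjE intro: eval_Proj)
  with Cons show ?case by (cases ys) auto
qed simp

lemma eval_Cons_args:
  assumes "\<And>y. eval g xs y \<longleftrightarrow> y = v"
    and "\<And>ys. list_all2 (\<lambda>g y. eval g xs y) gs ys \<longleftrightarrow> ys = vs"
  shows "list_all2 (\<lambda>g y. eval g xs y) (g # gs) ys \<longleftrightarrow> ys = v # vs"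
  using assms by (cases ys) auto

lemma eval_Comp_iff:
  assumes "\<And>ys. list_all2 (\<lambda>g y. eval g xs y) gs ys \<longleftrightarrow> ys = vs"
    and "\<And>y. eval f vs y \<longleftrightarrow> y = v"
  shows "eval (Comp f gs) xs y \<longleftrightarrow> y = v"
  using assms by (auto elim: eval_CompE intro: eval_Comp)

lemma eval_PrimRec_iff:
  assumes "\<And>y. eval f xs y \<longleftrightarrow> y = b"
    and "\<And>i r y. eval g (i # r # xs) y \<longleftrightarrow> y = s i r"
  shows "eval (PrimRec f g) (n # xs) y \<longleftrightarrow> y = rec_nat b s n"
proof (induction n arbitrary: y)
  case 0
  then show ?case using assms(1) by (auto elim: eval_PrimRecE intro: eval_Prim0)
next
  case (Suc n)
  then show ?case using assms(2) by (auto elim: eval_PrimRecE intro: eval_PrimS)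
qed

lemma eval_Projs_nth:
  assumes "\<forall>i\<in>set ps. i < length xs" "map (nth xs) ps = vs"
  shows "list_all2 (\<lambda>g y. eval g xs y) (map Proj ps) ys \<longleftrightarrow> ys = vs"
  using eval_Projs[OF assms(1)] assms(2) by simp

lemma map_nth_upt: "b \<le> length xs \<Longrightarrow> map (nth xs) [a..<b] = drop a (take b xs)"
  by (rule nth_equalityI) auto

lemma eval_compile: "length env = n \<Longrightarrow> eval (compile n e) env y \<longleftrightarrow> y = ev e env"
proof (induction e arbitrary: n env y)
  case Z
  then show ?case by (auto elim: eval_ZeroE intro: eval_Zero)
next
  case (S e)
  have "list_all2 (\<lambda>g y. eval g env y) [compile n e] ys \<longleftrightarrow> ys = [ev e env]" for ys
    using S.IH[OF S.prems] by (intro eval_Cons_args) auto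
  moreover have "eval Succ [ev e env] y \<longleftrightarrow> y = Suc (ev e env)" for y
    by (auto elim: eval_SuccE intro: eval_Succ)
  ultimately show ?case by (simp add: eval_Comp_iff)
next
  case (V i)
  then show ?case by (auto elim: eval_ZeroE eval_ProjE intro: eval_Zero eval_Proj)
next
  case (Rec m b s)
  have "list_all2 (\<lambda>g y. eval g env y) (map Proj [0..<n]) ys \<longleftrightarrow> ys = env" for ys
    using Rec.prems by (intro eval_Projs_nth) (auto simp: map_nth_upt)
  then have args: "list_all2 (\<lambda>g y. eval g env y) (compile n m # map Proj [0..<n]) ys
      \<longleftrightarrow> ys = ev m env # env" for ys
    using Rec.IH(1)[OF Rec.prems] by (intro eval_Cons_args)
  have "eval (PrimRec (compile n b) (compile (Suc (Suc n)) s)) (ev m env # env) y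
      \<longleftrightarrow> y = rec_nat (ev b env) (\<lambda>i r. ev s (i # r # env)) (ev m env)" for y
    using Rec.prems Rec.IH(2,3) by (intro eval_PrimRec_iff) auto
  from eval_Comp_iff[OF args this] show ?case by simp
next
  case (Lift e)
  have "list_all2 (\<lambda>g y. eval g env y) (map Proj [1..<n]) ys \<longleftrightarrow> ys = tl env" for ys
    using Lift.prems by (intro eval_Projs_nth) (auto simp: map_nth_upt drop_Suc)
  moreover have "length (tl env) = n - 1" using Lift.prems by simp
  ultimately show ?case using eval_Comp_iff Lift.IH by simp
next
  case (Lift1 e)
  have "list_all2 (\<lambda>g y. eval g env y) (map Proj ([0..<min n 1] @ [2..<n])) ys
      \<longleftrightarrow> ys = take 1 env @ drop 2 env" for ys
    using Lift1.prems by (intro eval_Projs_nth) (auto simp: map_nth_upt min_def)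
  moreover have "length (take 1 env @ drop 2 env) = min n 1 + (n - 2)" using Lift1.prems by simp
  ultimately show ?case using eval_Comp_iff Lift1.IH by simp
next
  case (Bind e b)
  have "list_all2 (\<lambda>g y. eval g env y) (map Proj [0..<n]) ys \<longleftrightarrow> ys = env" for ys
    using Bind.prems by (intro eval_Projs_nth) (auto simp: map_nth_upt)
  then have args: "list_all2 (\<lambda>g y. eval g env y) (compile n e # map Proj [0..<n]) ys
      \<longleftrightarrow> ys = ev e env # env" for ys
    using Bind.IH(1)[OF Bind.prems] by (intro eval_Cons_args)
  show ?case using eval_Comp_iff[OF args] Bind.prems Bind.IH(2) by simp
qed

definition holds :: "expr \<Rightarrow> nat list \<Rightarrow> bool" where
  "holds e env \<longleftrightarrow> ev e env \<noteq> 0"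

definition "Neg a = Rec a (S Z) Z"

lemma ev_Neg: "ev (Neg a) env = (if holds a env then 0 else 1)"
  unfolding Neg_def holds_def by (cases "ev a env") auto

lemma holds_Neg [simp]: "holds (Neg a) env \<longleftrightarrow> \<not> holds a env"
  by (simp add: holds_def ev_Neg)

lemma r_e_if_expr_projection:
  assumes "\<And>n. n \<in> A \<longleftrightarrow> (\<exists>c. holds e [c, n])"
  shows "r_e A"
  unfolding r_e_def
proof (intro exI allI)
  fix n
  let ?f = "compile 2 (Neg e)"
  have f: "eval ?f [c, n] y \<longleftrightarrow> y = ev (Neg e) [c, n]" for c y
    by (rule eval_compile) simp
  show "n \<in> A \<longleftrightarrow> (\<exists>y. eval (Mini ?f) [n] y)"
  proof
    assume "n \<in> A"
    then have ex: "\<exists>c. holds e [c, n]" using assms by blast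
    define c where "c = (LEAST c. holds e [c, n])"
    have "holds e [c, n]" unfolding c_def using ex by (rule LeastI_ex)
    moreover have "\<not> holds e [z, n]" if "z < c" for z
      using that not_less_Least unfolding c_def by blast
    ultimately have "eval (Mini ?f) [n] c"
      using f by (intro eval_Mini) (auto simp: ev_Neg)
    then show "\<exists>y. eval (Mini ?f) [n] y" by blast
  next
    assume "\<exists>y. eval (Mini ?f) [n] y"
    then obtain c where "eval (Mini ?f) [n] c" by blast
    then have "eval ?f [c, n] 0" by (rule eval_MiniE)
    then show "n \<in> A" using assms f by (auto simp: ev_Neg split: if_splits)
  qed
qed

definition "Pred a = Rec a Z (V 0)"
definition "Add a b = Rec a b (S (V 1))"
definition "Sub a b = Rec b a (Pred (V 1))"
definition "Tri a = Rec a Z (Add (V 1) (S (V 0)))"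

lemma ev_Pred [simp]: "ev (Pred a) env = ev a env - 1"
  unfolding Pred_def by (cases "ev a env") auto

lemma ev_Add [simp]: "ev (Add a b) env = ev a env + ev b env"
proof -
  have "rec_nat x (\<lambda>_ r. Suc r) n = n + x" for x n :: nat by (induction n) auto
  then show ?thesis unfolding Add_def by simp
qed

lemma ev_Sub [simp]: "ev (Sub a b) env = ev a env - ev b env"
proof -
  have "rec_nat x (\<lambda>_ r. r - 1) n = x - n" for x n :: nat by (induction n) auto
  then show ?thesis unfolding Sub_def by simp
qed

lemma ev_Tri [simp]: "ev (Tri a) env = triangle (ev a env)"
proof -
  have "rec_nat 0 (\<lambda>k r. r + Suc k) n = triangle n" for n by (induction n) auto
  then show ?thesis unfolding Tri_def by simp
qed

definition "Conj a b = Neg (Add (Neg a) (Neg b))"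
definition "Disj a b = Add a b"
definition "Equal a b = Neg (Add (Sub a b) (Sub b a))"
definition "Less a b = Sub b a"
definition "Ite c a b = Rec (Neg c) a (Lift (Lift b))"
definition "ExLess n body = Rec n Z (Add (V 1) (Lift1 body))"
definition "AllLess n body = Neg (ExLess n (Neg body))"

lemma holds_Conj [simp]: "holds (Conj a b) env \<longleftrightarrow> holds a env \<and> holds b env"
  by (simp add: Conj_def holds_def ev_Neg)

lemma holds_Disj [simp]: "holds (Disj a b) env \<longleftrightarrow> holds a env \<or> holds b env"
  by (simp add: Disj_def holds_def)

lemma holds_Equal [simp]: "holds (Equal a b) env \<longleftrightarrow> ev a env = ev b env"
  by (auto simp: Equal_def holds_def ev_Neg)

lemma holds_Less [simp]: "holds (Less a b) env \<longleftrightarrow> ev a env < ev b env"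
  by (auto simp: Less_def holds_def)

lemma ev_Ite [simp]: "ev (Ite c a b) env = (if holds c env then ev a env else ev b env)"
  by (simp add: Ite_def ev_Neg)

lemma holds_ExLess [simp]: "holds (ExLess n body) env \<longleftrightarrow> (\<exists>z < ev n env. holds body (z # env))"
proof -
  have "rec_nat 0 (\<lambda>k r. r + ev body (k # env)) m \<noteq> 0 \<longleftrightarrow> (\<exists>z < m. ev body (z # env) \<noteq> 0)" for m
    by (induction m) (auto simp: less_Suc_eq)
  then show ?thesis unfolding ExLess_def holds_def by simp
qed

lemma holds_AllLess [simp]: "holds (AllLess n body) env \<longleftrightarrow> (\<forall>z < ev n env. holds body (z # env))"
  by (simp add: AllLess_def)

definition "Even a = Rec a (S Z) (Neg (V 1))"
definition "Half a = Rec a Z (Ite (Even (V 0)) (V 1) (S (V 1)))"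

lemma holds_Even [simp]: "holds (Even a) env \<longleftrightarrow> even (ev a env)"
proof -
  have "rec_nat (Suc 0) (\<lambda>_ r. if r \<noteq> 0 then 0 else 1) n = (if even n then 1 else 0)" for n
    by (induction n) auto
  then show ?thesis unfolding Even_def holds_def by (simp add: ev_Neg holds_def)
qed

lemma ev_Half [simp]: "ev (Half a) env = ev a env div 2"
proof -
  have "rec_nat 0 (\<lambda>k r. if even k then r else Suc r) n = n div 2" for n :: nat
    by (induction n) auto
  then show ?thesis unfolding Half_def by (simp cong: if_cong)
qed

definition tri_root :: "nat \<Rightarrow> nat" where
  "tri_root n = rec_nat 0 (\<lambda>k r. if Suc k = triangle (Suc r) then Suc r else r) n"

lemma tri_root_bounds: "triangle (tri_root n) \<le> n \<and> n < triangle (Suc (tri_root n))"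
proof (induction n)
  case (Suc n)
  have "tri_root (Suc n) = (if Suc n = triangle (Suc (tri_root n)) then Suc (tri_root n) else tri_root n)"
    by (simp add: tri_root_def)
  with Suc show ?case by auto
qed (simp add: tri_root_def)

lemma prod_decode_tri_root:
  "prod_decode n = (n - triangle (tri_root n), tri_root n - (n - triangle (tri_root n)))"
proof -
  let ?s = "tri_root n" and ?x = "n - triangle (tri_root n)"
  have "triangle ?s \<le> n" "n < triangle ?s + Suc ?s" using tri_root_bounds[of n] by auto
  then have "prod_encode (?x, ?s - ?x) = n" unfolding prod_encode_def by simp
  then show ?thesis by (metis prod_encode_inverse)
qed

definition "TriRoot a = Rec a Z (Ite (Equal (S (V 0)) (Tri (S (V 1)))) (S (V 1)) (V 1))"
definition "Fst a = Bind a (Sub (V 0) (Tri (TriRoot (V 0))))"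
definition "Snd a = Bind a (Sub (TriRoot (V 0)) (Fst (V 0)))"
definition "PairE a b = Add (Tri (Add a b)) a"

lemma ev_TriRoot [simp]: "ev (TriRoot a) env = tri_root (ev a env)"
proof -
  have "(\<lambda>k r. ev (Ite (Equal (S (V 0)) (Tri (S (V 1)))) (S (V 1)) (V 1)) (k # r # env))
      = (\<lambda>k r. if Suc k = triangle (Suc r) then Suc r else r)"
    by (intro ext) (simp del: triangle_Suc)
  then show ?thesis unfolding TriRoot_def tri_root_def by (simp del: triangle_Suc)
qed

lemma ev_Fst [simp]: "ev (Fst a) env = fst (prod_decode (ev a env))"
  unfolding Fst_def by (simp add: prod_decode_tri_root)

lemma ev_Snd [simp]: "ev (Snd a) env = snd (prod_decode (ev a env))"
  unfolding Snd_def by (simp add: prod_decode_tri_root)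

lemma ev_PairE [simp]: "ev (PairE a b) env = prod_encode (ev a env, ev b env)"
  unfolding PairE_def by (simp add: prod_encode_def)

(* List codes: list_encode (x # xs) = Suc (prod_encode (x, list_encode xs)). *)
definition tl_code :: "nat \<Rightarrow> nat" where
  "tl_code n = snd (prod_decode (n - 1))"

lemma prod_decode_0 [simp]: "prod_decode 0 = (0, 0)"
proof -
  have "prod_encode (0, 0) = 0" by (simp add: prod_encode_def)
  then show ?thesis by (metis prod_encode_inverse)
qed

lemma tl_code_list_encode [simp]: "tl_code (list_encode xs) = list_encode (tl xs)"
  by (cases xs) (simp_all add: tl_code_def)

lemma funpow_tl_code_0 [simp]: "(tl_code ^^ i) 0 = 0"
  by (induction i) (simp_all add: tl_code_def)

lemma funpow_tl_code [simp]: "(tl_code ^^ i) (list_encode xs) = list_encode (drop i xs)"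
  by (induction i) (simp_all add: drop_Suc tl_drop)

lemma hd_code_list_encode: "xs \<noteq> [] \<Longrightarrow> fst (prod_decode (list_encode xs - Suc 0)) = hd xs"
  by (cases xs) simp_all

lemma list_encode_eq_0_iff [simp]: "list_encode xs = 0 \<longleftrightarrow> xs = []"
  by (cases xs) simp_all

lemma length_le_list_encode: "length xs \<le> list_encode xs"
proof (induction xs)
  case (Cons x xs)
  then show ?case using le_prod_encode_2[of "list_encode xs" x] by simp
qed simp

definition "Hd c = Fst (Pred c)"
definition "Tl c = Snd (Pred c)"
definition "DropE i c = Rec i c (Tl (V 1))"
definition "ConsE x l = S (PairE x l)"

lemma ev_Tl [simp]: "ev (Tl c) env = tl_code (ev c env)"
  by (simp add: Tl_def tl_code_def)

lemma ev_Hd [simp]: "ev (Hd c) env = fst (prod_decode (ev c env - 1))"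
  by (simp add: Hd_def)

lemma ev_DropE [simp]: "ev (DropE i c) env = (tl_code ^^ ev i env) (ev c env)"
proof -
  have "rec_nat x (\<lambda>_ r. tl_code r) n = (tl_code ^^ n) x" for x n by (induction n) auto
  then show ?thesis unfolding DropE_def Tl_def by (simp add: tl_code_def)
qed

lemma ev_ConsE [simp]: "ev (ConsE x l) env = Suc (prod_encode (ev x env, ev l env))"
  by (simp add: ConsE_def)

definition "ExIn l body = ExLess l (Conj (DropE (V 0) (Lift l)) (Bind (Hd (DropE (V 0) (Lift l))) (Lift1 body)))"
definition "AllIn l body = Neg (ExIn l (Neg body))"

lemma holds_Bind [simp]: "holds (Bind e b) env \<longleftrightarrow> holds b (ev e env # env)"
  by (simp add: holds_def)

lemma holds_Lift1 [simp]: "holds (Lift1 e) env \<longleftrightarrow> holds e (take 1 env @ drop 2 env)"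
  by (simp add: holds_def)

lemma holds_DropE [simp]: "holds (DropE i c) env \<longleftrightarrow> (tl_code ^^ ev i env) (ev c env) \<noteq> 0"
  by (simp add: holds_def)

lemma ex_drop_nonempty_iff:
  "(\<exists>z < list_encode xs. drop z xs \<noteq> [] \<and> P (hd (drop z xs))) \<longleftrightarrow> (\<exists>x\<in>set xs. P x)"
proof
  assume "\<exists>z < list_encode xs. drop z xs \<noteq> [] \<and> P (hd (drop z xs))"
  then obtain z where "z < length xs" "P (xs ! z)" by (auto simp: hd_drop_conv_nth not_le)
  then show "\<exists>x\<in>set xs. P x" by (metis nth_mem)
next
  assume "\<exists>x\<in>set xs. P x"
  then obtain z where "z < length xs" "P (xs ! z)" by (metis in_set_conv_nth)
  moreover have "z < list_encode xs" using calculation(1) length_le_list_encode by (rule less_le_trans)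
  ultimately show "\<exists>z < list_encode xs. drop z xs \<noteq> [] \<and> P (hd (drop z xs))"
    by (auto simp: hd_drop_conv_nth)
qed

lemma all_drop_nonempty_iff:
  "(\<forall>z < list_encode xs. drop z xs = [] \<or> P z) \<longleftrightarrow> (\<forall>z < length xs. P z)"
proof
  assume "\<forall>z < list_encode xs. drop z xs = [] \<or> P z"
  moreover have "z < list_encode xs" if "z < length xs" for z
    using that length_le_list_encode by (rule less_le_trans)
  ultimately show "\<forall>z < length xs. P z" by force
next
  assume "\<forall>z < length xs. P z"
  then show "\<forall>z < list_encode xs. drop z xs = [] \<or> P z" by (metis drop_eq_Nil leI)
qed

lemma holds_ExIn [simp]:
  "holds (ExIn l body) env \<longleftrightarrow> (\<exists>x\<in>set (list_decode (ev l env)). holds body (x # env))"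
proof -
  obtain xs where l: "ev l env = list_encode xs" by (metis list_decode_inverse)
  have "holds (ExIn l body) env \<longleftrightarrow>
      (\<exists>z < list_encode xs. drop z xs \<noteq> [] \<and> holds body (hd (drop z xs) # env))"
    unfolding ExIn_def by (simp add: l hd_code_list_encode cong: conj_cong)
  with ex_drop_nonempty_iff[of xs "\<lambda>x. holds body (x # env)"] show ?thesis by (simp add: l)
qed

lemma holds_AllIn [simp]:
  "holds (AllIn l body) env \<longleftrightarrow> (\<forall>x\<in>set (list_decode (ev l env)). holds body (x # env))"
  by (simp add: AllIn_def)

primrec num :: "nat \<Rightarrow> expr" where
  "num 0 = Z"
| "num (Suc n) = S (num n)"

lemma ev_num [simp]: "ev (num n) env = n"
  by (induction n) simp_all

definition "IsZero a = Equal a Z"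

lemma holds_IsZero [simp]: "holds (IsZero a) env \<longleftrightarrow> ev a env = 0"
  by (simp add: IsZero_def)

definition "Member x l = ExIn l (Equal (V 0) (Lift x))"

lemma holds_Member [simp]: "holds (Member x l) env \<longleftrightarrow> ev x env \<in> set (list_decode (ev l env))"
  by (auto simp: Member_def)

lemma distinct_map_iff_drop:
  "distinct (map f xs) \<longleftrightarrow> (\<forall>z < length xs. \<forall>y\<in>set (drop (Suc z) xs). f y \<noteq> f (xs ! z))"
  by (induction xs) (auto simp: All_less_Suc2 image_iff)

definition "DistinctFst l = AllLess l (Disj (IsZero (DropE (V 0) (Lift l)))
  (Neg (ExIn (Tl (DropE (V 0) (Lift l))) (Equal (Fst (V 0)) (Fst (Hd (DropE (V 1) (Lift (Lift l)))))))))"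

lemma holds_DistinctFst [simp]:
  "holds (DistinctFst l) env \<longleftrightarrow> distinct (map (\<lambda>y. fst (prod_decode y)) (list_decode (ev l env)))"
proof -
  obtain xs where l: "ev l env = list_encode xs" by (metis list_decode_inverse)
  let ?f = "\<lambda>y. fst (prod_decode y)"
  have "holds (DistinctFst l) env \<longleftrightarrow> (\<forall>z < list_encode xs. drop z xs = [] \<or>
      (\<forall>y\<in>set (tl (drop z xs)). ?f y \<noteq> ?f (hd (drop z xs))))"
    unfolding DistinctFst_def by (simp add: l hd_code_list_encode cong: disj_cong)
  also have "\<dots> \<longleftrightarrow> (\<forall>z < length xs. \<forall>y\<in>set (tl (drop z xs)). ?f y \<noteq> ?f (hd (drop z xs)))"
    by (rule all_drop_nonempty_iff)
  also have "\<dots> \<longleftrightarrow> distinct (map ?f xs)"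
    unfolding distinct_map_iff_drop by (simp add: hd_drop_conv_nth drop_Suc tl_drop)
  finally show ?thesis by (simp add: l)
qed

section \<open>Coding certificates\<close>

fun code_move :: "move \<Rightarrow> nat" where
  "code_move Pass = 0"
| "code_move (Col x a) = Suc (prod_encode (code_cell x, a))"

definition code_hist :: "move list \<Rightarrow> nat" where
  "code_hist h = list_encode (map code_move h)"

definition code_cert :: "cell list \<Rightarrow> move list list \<Rightarrow> nat" where
  "code_cert Es T = prod_encode (list_encode (map code_cell Es), list_encode (map code_hist T))"

definition decode_cell :: "nat \<Rightarrow> cell" where
  "decode_cell n = map int_decode (list_decode n)"

definition decode_move :: "nat \<Rightarrow> move" where
  "decode_move n = (if n = 0 then Pass
     else Col (decode_cell (fst (prod_decode (n - 1)))) (snd (prod_decode (n - 1))))"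

definition decode_hist :: "nat \<Rightarrow> move list" where
  "decode_hist n = map decode_move (list_decode n)"

definition decode_pattern :: "nat \<Rightarrow> fpattern" where
  "decode_pattern n = map (\<lambda>y. (decode_cell (fst (prod_decode y)), snd (prod_decode y))) (list_decode n)"

lemma decode_code_cell [simp]: "decode_cell (code_cell x) = x"
  by (simp add: decode_cell_def code_cell_def comp_def)

lemma code_decode_cell [simp]: "code_cell (decode_cell n) = n"
  by (simp add: decode_cell_def code_cell_def comp_def)

lemma code_cell_eq_iff [simp]: "code_cell x = code_cell y \<longleftrightarrow> x = y"
  by (metis decode_code_cell)

lemma decode_code_move [simp]: "decode_move (code_move m) = m"
  by (cases m) (simp_all add: decode_move_def)

lemma code_decode_move [simp]: "code_move (decode_move n) = n"
  by (cases n) (simp_all add: decode_move_def)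

lemma decode_code_hist [simp]: "decode_hist (code_hist h) = h"
  by (simp add: decode_hist_def code_hist_def comp_def)

lemma code_decode_hist [simp]: "code_hist (decode_hist n) = n"
  by (simp add: decode_hist_def code_hist_def comp_def)

lemma code_hist_eq_iff [simp]: "code_hist h = code_hist h' \<longleftrightarrow> h = h'"
  by (metis decode_code_hist)

lemma decode_code_pattern [simp]: "decode_pattern (code_pattern q) = q"
  unfolding decode_pattern_def code_pattern_def by (induction q) auto

lemma code_decode_pattern [simp]: "code_pattern (decode_pattern n) = n"
  unfolding decode_pattern_def code_pattern_def by (simp add: comp_def case_prod_beta)

lemma code_instance_surj: "\<exists>k F. n = code_instance k F"
proof -
  obtain k l where "prod_decode n = (k, l)" by fastforce
  then have "code_instance k (map decode_pattern (list_decode l)) = n"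
    unfolding code_instance_def by (simp add: comp_def) (metis prod_decode_inverse)
  then show ?thesis by metis
qed

lemma decode_code_comp [simp]:
  "decode_cell \<circ> code_cell = id" "decode_hist \<circ> code_hist = id" "decode_pattern \<circ> code_pattern = id"
  by (simp_all add: fun_eq_iff)

lemma code_pattern_eq_iff [simp]: "code_pattern q = code_pattern q' \<longleftrightarrow> q = q'"
  by (metis decode_code_pattern)

lemma code_instance_eq_iff: "code_instance k F = code_instance k' F' \<longleftrightarrow> k = k' \<and> F = F'"
  unfolding code_instance_def by (simp add: list_encode_eq inj_map_eq_map inj_def)

lemma code_cert_surj: "\<exists>Es T. c = code_cert Es T"
proof -
  obtain e t where "prod_decode c = (e, t)" by fastforce
  then have "code_cert (map decode_cell (list_decode e)) (map decode_hist (list_decode t)) = c"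
    unfolding code_cert_def by (simp add: comp_def) (metis prod_decode_inverse)
  then show ?thesis by metis
qed

fun cell_code :: "move \<Rightarrow> nat" where
  "cell_code Pass = 0"
| "cell_code (Col x a) = code_cell x"

fun colour :: "move \<Rightarrow> nat" where
  "colour Pass = 0"
| "colour (Col x a) = a"

lemma code_move_components [simp]:
  "fst (prod_decode (code_move m - Suc 0)) = cell_code m"
  "snd (prod_decode (code_move m - Suc 0)) = colour m"
  by (cases m; simp)+

lemma code_move_eq_0_iff [simp]: "code_move m = 0 \<longleftrightarrow> m = Pass"
  by (cases m) simp_all

lemma code_move_pos_iff [simp]: "0 < code_move m \<longleftrightarrow> m \<noteq> Pass"
  by (cases m) simp_all

lemma list_decode_code_hist [simp]: "list_decode (code_hist h) = map code_move h"
  by (simp add: code_hist_def)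

definition "CellOf m = Fst (Pred m)"
definition "ColourOf m = Snd (Pred m)"

lemma ev_CellOf [simp]: "ev (CellOf m) env = fst (prod_decode (ev m env - 1))"
  by (simp add: CellOf_def)

lemma ev_ColourOf [simp]: "ev (ColourOf m) env = snd (prod_decode (ev m env - 1))"
  by (simp add: ColourOf_def)

definition "FreshE m t = Disj (IsZero m) (AllIn t (Disj (IsZero (V 0)) (Neg (Equal (CellOf (V 0)) (CellOf (Lift m))))))"

lemma holds_FreshE [simp]:
  "holds (FreshE m t) env \<longleftrightarrow> fresh (decode_move (ev m env)) (decode_hist (ev t env))"
proof -
  obtain b h where codes: "ev m env = code_move b" "ev t env = code_hist h"
    by (metis code_decode_move code_decode_hist)
  have "(m' = Pass \<or> cell_code m' \<noteq> code_cell x) \<longleftrightarrow> (\<forall>c. m' \<noteq> Col x c)" for m' x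
    by (cases m') auto
  then have "holds (FreshE m t) env \<longleftrightarrow> fresh b h"
    using codes by (cases b) (auto simp: FreshE_def)
  then show ?thesis using codes by simp
qed

lemma bex_moves: "(\<exists>b\<in>moves k E. P b) \<longleftrightarrow> P Pass \<or> (\<exists>x\<in>E. \<exists>a<k. P (Col x a))"
  by (auto simp: moves_def)

definition "ExMove es k body =
  Disj (Bind Z body) (ExIn es (ExLess (Lift k) (Bind (S (PairE (V 1) (V 0))) (Lift1 (Lift1 body)))))"
definition "AllMove es k body = Neg (ExMove es k (Neg body))"

lemma holds_ExMove [simp]:
  "holds (ExMove es k body) env \<longleftrightarrow>
    (\<exists>b\<in>moves (ev k env) (decode_cell ` set (list_decode (ev es env))). holds body (code_move b # env))"
proof -
  obtain Es where "ev es env = list_encode (map code_cell Es)"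
    by (metis list_decode_inverse map_map code_decode_cell comp_def map_idI)
  then show ?thesis by (simp add: ExMove_def bex_moves image_image)
qed

lemma holds_AllMove [simp]:
  "holds (AllMove es k body) env \<longleftrightarrow>
    (\<forall>b\<in>moves (ev k env) (decode_cell ` set (list_decode (ev es env))). holds body (code_move b # env))"
  by (simp add: AllMove_def)

definition "HasLength d x =
  (if d = 0 then IsZero x else Conj (IsZero (DropE (num d) x)) (Neg (IsZero (DropE (num (d - 1)) x))))"

lemma holds_HasLength [simp]: "holds (HasLength d x) env \<longleftrightarrow> length (list_decode (ev x env)) = d"
proof -
  obtain xs where "ev x env = list_encode xs" by (metis list_decode_inverse)
  then show ?thesis by (cases "xs = []") (auto simp: HasLength_def le_diff_conv2)
qed

(* Since int_decode v = pos_part v - neg_part v, an equation between sums of decoded integers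
   is an equation between sums of natural numbers, which expressions can evaluate. *)
definition pos_part :: "nat \<Rightarrow> nat" where
  "pos_part v = (if even v then v div 2 else 0)"

definition neg_part :: "nat \<Rightarrow> nat" where
  "neg_part v = (if even v then 0 else Suc (v div 2))"

lemma int_decode_parts: "int_decode v = int (pos_part v) - int (neg_part v)"
  by (simp add: pos_part_def neg_part_def int_decode_def sum_decode_def)

lemma int_decode_sum_eq_iff:
  "pos_part u1 + pos_part u2 + (neg_part u3 + neg_part u4) = pos_part u3 + pos_part u4 + (neg_part u1 + neg_part u2)
   \<longleftrightarrow> int_decode u1 + int_decode u2 = int_decode u3 + int_decode u4"
  unfolding int_decode_parts by linarith

definition "Coord x = Hd (DropE (V 0) (Lift x))"
definition "PosPart y = Ite (Even y) (Half y) Z"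
definition "NegPart y = Ite (Even y) Z (S (Half y))"

lemma ev_PosPart [simp]: "ev (PosPart y) env = pos_part (ev y env)"
  by (simp add: PosPart_def pos_part_def)

lemma ev_NegPart [simp]: "ev (NegPart y) env = neg_part (ev y env)"
  by (simp add: NegPart_def neg_part_def)

lemma int_decode_coordinate [simp]:
  "int_decode (ev (Coord x) (l # env)) = nth_default 0 (decode_cell (ev x env)) l"
proof -
  obtain xs where x: "ev x env = list_encode xs" by (metis list_decode_inverse)
  show ?thesis
  proof (cases "l < length xs")
    case True
    then have "drop l xs \<noteq> []" by simp
    with True show ?thesis
      by (simp add: Coord_def x hd_code_list_encode decode_cell_def nth_default_nth hd_drop_conv_nth)
  next
    case False
    then show ?thesis
      by (simp add: Coord_def x decode_cell_def nth_default_beyond int_decode_def sum_decode_def)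
  qed
qed

definition "SumEq d a b c e = AllLess (num d)
  (Equal (Add (Add (PosPart (Coord a)) (PosPart (Coord b))) (Add (NegPart (Coord c)) (NegPart (Coord e))))
         (Add (Add (PosPart (Coord c)) (PosPart (Coord e))) (Add (NegPart (Coord a)) (NegPart (Coord b)))))"

lemma holds_SumEq [simp]:
  "holds (SumEq d a b c e) env \<longleftrightarrow> (\<forall>l<d.
     nth_default 0 (decode_cell (ev a env)) l + nth_default 0 (decode_cell (ev b env)) l =
     nth_default 0 (decode_cell (ev c env)) l + nth_default 0 (decode_cell (ev e env)) l)"
  by (simp add: SumEq_def int_decode_sum_eq_iff del: ev_Hd ev_DropE)

lemma list_decode_code_pattern [simp]:
  "list_decode (code_pattern q) = map (\<lambda>(x, a). prod_encode (code_cell x, a)) q"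
  by (simp add: code_pattern_def)

lemma length_code_cell [simp]: "length (list_decode (code_cell x)) = length x"
  by (simp add: code_cell_def)

lemma distinct_code_cells:
  "distinct (map ((\<lambda>y. fst (prod_decode y)) \<circ> (\<lambda>(x, a). prod_encode (code_cell x, a))) q)
   \<longleftrightarrow> distinct (map fst q)"
proof -
  have "(\<lambda>y. fst (prod_decode y)) \<circ> (\<lambda>(x, a). prod_encode (code_cell x, a)) = code_cell \<circ> fst"
    by auto
  then show ?thesis by (simp add: distinct_map inj_on_def)
qed

definition "WellFormed d F k = AllIn F (Conj (DistinctFst (V 0))
  (AllIn (V 0) (Conj (HasLength d (Fst (V 0))) (Less (Snd (V 0)) (Lift (Lift k))))))"

lemma holds_WellFormed [simp]:
  "holds (WellFormed d F k) env \<longleftrightarrow> wf_instance d (ev k env) (map decode_pattern (list_decode (ev F env)))"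
proof -
  obtain Fs where "ev F env = list_encode (map code_pattern Fs)"
    by (metis list_decode_inverse map_map code_decode_pattern comp_def map_idI)
  then show ?thesis
    by (simp add: WellFormed_def wf_instance_def wf_pattern_def distinct_code_cells split_beta)
qed

lemma code_pattern_eq_0_iff [simp]: "code_pattern q = 0 \<longleftrightarrow> q = []"
  by (simp add: code_pattern_def)

lemma hd_code_pattern:
  "q \<noteq> [] \<Longrightarrow> fst (prod_decode (code_pattern q - Suc 0)) = prod_encode (code_cell (fst (hd q)), snd (hd q))"
  by (cases q) (auto simp: code_pattern_def)

lemma bex_Col: "(\<exists>m\<in>set h. m \<noteq> Pass \<and> P m) \<longleftrightarrow> (\<exists>x a. Col x a \<in> set h \<and> P (Col x a))"
proof
  assume "\<exists>m\<in>set h. m \<noteq> Pass \<and> P m"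
  then obtain m where m: "m \<in> set h" "m \<noteq> Pass" "P m" by blast
  show "\<exists>x a. Col x a \<in> set h \<and> P (Col x a)"
  proof (cases m)
    case (Col x a)
    then show ?thesis using m by blast
  qed (use m in simp)
qed auto

(* Below the last binder the environment is m # (j, a) # m0 # q # env, where m and the anchor
   m0 range over the moves of t and (j, a) over the pattern q of F. *)
definition "OccursE d t F = ExIn F (Disj (IsZero (V 0))
  (ExIn (Lift t) (Conj (Neg (IsZero (V 0))) (AllIn (V 1)
    (ExIn (Lift (Lift (Lift t))) (Conj (Neg (IsZero (V 0))) (Conj (Equal (ColourOf (V 0)) (Snd (V 1)))
      (SumEq d (CellOf (V 0)) (Fst (Hd (V 3))) (CellOf (V 2)) (Fst (V 1))))))))))"

lemma holds_OccursE [simp]: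
  "holds (OccursE d t F) env \<longleftrightarrow>
    occurs_in_hist d (map decode_pattern (list_decode (ev F env))) (decode_hist (ev t env))"
proof -
  obtain h Fs where "ev t env = code_hist h" "ev F env = list_encode (map code_pattern Fs)"
    by (metis code_decode_hist list_decode_inverse map_map code_decode_pattern comp_def map_idI)
  then show ?thesis
    unfolding occurs_in_hist_def anchored_at_def OccursE_def
    by (simp add: hd_code_pattern bex_Col split_beta cong: disj_cong)
qed

lemma code_hist_Cons [simp]: "Suc (prod_encode (code_move m, code_hist t)) = code_hist (m # t)"
  by (simp add: code_hist_def)

lemma inj_code_hist: "inj code_hist"
  by (rule injI) simp

lemma zero_in_code_hists: "0 \<in> code_hist ` A \<longleftrightarrow> [] \<in> A"
  by (metis code_decode_hist decode_hist_def image_iff list.simps(8) list_decode.simps(1) decode_code_hist)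

(* Cert d is evaluated in k # F # Es # T # env, and below its last binder in
   b # a # t # k # F # Es # T # env. *)
definition "Cert d =
  Conj (AllIn (V 2) (HasLength d (V 0)))
   (Conj (Member Z (V 3))
     (AllIn (V 3)
       (Disj (OccursE d (V 0) (V 2))
         (ExMove (V 3) (V 1)
           (Conj (FreshE (V 0) (V 1))
             (AllMove (V 4) (V 2)
               (Disj (Neg (FreshE (V 0) (ConsE (V 1) (V 2))))
                 (Member (ConsE (V 0) (ConsE (V 1) (V 2))) (V 6)))))))))"

lemma holds_Cert:
  "holds (Cert d) (k # list_encode (map code_pattern F) # list_encode (map code_cell Es) #
     list_encode (map code_hist T) # env) \<longleftrightarrow> is_certificate d k F Es T"
  by (simp add: Cert_def is_certificate_def inj_image_mem_iff[OF inj_code_hist] zero_in_code_hists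
      image_image)

definition "Check d =
  Bind (Snd (V 0)) (Bind (Fst (V 1)) (Bind (Snd (V 3)) (Bind (Fst (V 4))
    (Conj (WellFormed d (V 1) (V 0)) (Cert d)))))"

lemma holds_Check:
  "holds (Check d) [code_cert Es T, code_instance k F] \<longleftrightarrow> wf_instance d k F \<and> is_certificate d k F Es T"
  by (simp add: Check_def code_cert_def code_instance_def holds_Cert)

theorem proposition1:
  fixes d :: nat
  assumes "d > 0"
  shows "r_e (domino_problem d)"
proof (rule r_e_if_expr_projection)
  fix n
  obtain k F where n: "n = code_instance k F" using code_instance_surj by blast
  have "n \<in> domino_problem d \<longleftrightarrow> wf_instance d k F \<and> A_wins d k F"
    unfolding domino_problem_def n by (simp add: code_instance_eq_iff)
  also have "\<dots> \<longleftrightarrow> (\<exists>Es T. wf_instance d k F \<and> is_certificate d k F Es T)"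
    using A_wins_iff_certificate by blast
  also have "\<dots> \<longleftrightarrow> (\<exists>c. holds (Check d) [c, n])"
    unfolding n using holds_Check code_cert_surj by metis
  finally show "n \<in> domino_problem d \<longleftrightarrow> (\<exists>c. holds (Check d) [c, n])" .
qed
end
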